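(* Let $p$ be an odd prime. Then $$2\sum_{k=(p+1)/2}^{[3p/4]}\binom{4k}{2k}\frac1{32^k}\equiv-4\sum_{k=1}^{[\frac{p+1}4]}\binom{4k-2}{2k-1}\frac1{32^k}\equiv\begin{cases}0\pmod p&\text{if }p\equiv\pm1\pmod8,\\1\pmod p&\text{if }p\equiv\pm5\pmod{16},\\-1\pmod p&\text{if }p\equiv\pm3\pmod{16}.\end{cases}$$
   Context: $[x]$ is the greatest integer $\le x$. *)

theory Defs
  imports Complex_Main "HOL-Computational_Algebra.Primes"
begin

text \<open>Congruence of rationals modulo a prime p: a - b = p*m/n with n an integer not divisible by p
  (i.e. a - b lies in p times the ring of p-integral rationals).\<close>
definition qcong :: "rat \<Rightarrow> rat \<Rightarrow> nat \<Rightarrow> bool" where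
  "qcong a b p \<longleftrightarrow> (\<exists>m n::int. n \<noteq> 0 \<and> \<not> (int p dvd n) \<and> a - b = of_int (int p * m) / of_int n)"

end

theory Submission
  imports Defs "HOL-Computational_Algebra.Polynomial" "HOL-Number_Theory.Cong"
begin

text \<open>Let \<open>n = (p - 1) / 2\<close>. Since \<open>n \<equiv> -1/2 (mod p)\<close>, one has
  \<open>binom(2m, m) \<equiv> (-4)\<^sup>m binom(n, m)\<close>, which turns \<open>-4 S\<^sub>2\<close> into
  \<open>\<Sum>\<^sub>k binom(n, 2k - 1) / 2\<^sup>k = b\<^sub>n / 2\<^sup>n\<close>, where \<open>(2 + \<surd>2)\<^sup>n = a\<^sub>n + b\<^sub>n \<surd>2\<close>.
  For a primitive 16th root of unity \<open>\<zeta>\<close> we have \<open>2 + \<surd>2 = (\<zeta> + \<zeta>\<^sup>-\<^sup>1)\<^sup>2\<close>, hence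
  \<open>(2 + \<surd>2)\<^sup>n = (\<zeta> + \<zeta>\<^sup>-\<^sup>1)\<^sup>p\<^sup>-\<^sup>1\<close>, and the Frobenius congruence
  \<open>(\<zeta> + \<zeta>\<^sup>-\<^sup>1)\<^sup>p \<equiv> \<zeta>\<^sup>p + \<zeta>\<^sup>-\<^sup>p (mod p)\<close> determines \<open>b\<^sub>n\<close> modulo \<open>p\<close> in terms of
  \<open>p mod 16\<close>; in the same way \<open>\<surd>2\<^sup>p \<equiv> \<plusminus>\<surd>2\<close> gives \<open>2\<^sup>n \<equiv> \<plusminus>1\<close>. Finally
  \<open>binom(2p + 2m, p + m) \<equiv> 2 binom(2m, m)\<close> matches each term of \<open>S\<^sub>1\<close> with a term of \<open>S\<^sub>2\<close>,
  up to the factor \<open>32\<^sup>n \<equiv> \<plusminus>1\<close>.\<close>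

section \<open>Congruences modulo an ideal with two generators\<close>

definition cong_ideal2 :: "'a::comm_ring_1 \<Rightarrow> 'a \<Rightarrow> 'a \<Rightarrow> 'a \<Rightarrow> bool"
    (\<open>(1[_ = _] '(' mod _, _'))\<close>)
  where "[x = y] (mod a, b) \<longleftrightarrow> (\<exists>h k. x - y = a * h + b * k)"

lemma cong_ideal2_refl [simp]: "[x = x] (mod a, b)"
  unfolding cong_ideal2_def by (intro exI[of _ 0]) simp

lemma cong_ideal2_sym: "[x = y] (mod a, b) \<Longrightarrow> [y = x] (mod a, b)"
  unfolding cong_ideal2_def by (metis minus_diff_eq minus_add_distrib mult_minus_right)

lemma cong_ideal2_add:
  assumes "[x = y] (mod a, b)" "[u = v] (mod a, b)"
  shows "[x + u = y + v] (mod a, b)"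
proof -
  obtain h k h' k' where "x - y = a * h + b * k" "u - v = a * h' + b * k'"
    using assms unfolding cong_ideal2_def by blast
  then have "(x + u) - (y + v) = a * (h + h') + b * (k + k')"
    by (simp add: algebra_simps)
  then show ?thesis
    unfolding cong_ideal2_def by blast
qed

lemma cong_ideal2_trans [trans]:
  "[x = y] (mod a, b) \<Longrightarrow> [y = z] (mod a, b) \<Longrightarrow> [x = z] (mod a, b)"
  using cong_ideal2_add[OF cong_ideal2_add cong_ideal2_refl, of x y a b y z "- y"] by simp

lemma cong_ideal2_mult_left: "[x = y] (mod a, b) \<Longrightarrow> [c * x = c * y] (mod a, b)"
  unfolding cong_ideal2_def by (metis right_diff_distrib distrib_left mult.left_commute)

lemma cong_ideal2_mult:
  "[x = y] (mod a, b) \<Longrightarrow> [u = v] (mod a, b) \<Longrightarrow> [x * u = y * v] (mod a, b)"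
  by (metis cong_ideal2_mult_left cong_ideal2_trans mult.commute)

lemma cong_ideal2_diff:
  "[x = y] (mod a, b) \<Longrightarrow> [u = v] (mod a, b) \<Longrightarrow> [x - u = y - v] (mod a, b)"
  using cong_ideal2_add[OF _ cong_ideal2_mult_left, of x y a b u v "- 1"] by simp

lemma cong_ideal2_power: "[x = y] (mod a, b) \<Longrightarrow> [x ^ n = y ^ n] (mod a, b)"
  by (induction n) (auto intro: cong_ideal2_mult)

lemma cong_ideal2_sum:
  "(\<And>i. i \<in> A \<Longrightarrow> [f i = g i] (mod a, b)) \<Longrightarrow> [sum f A = sum g A] (mod a, b)"
  by (induction A rule: infinite_finite_induct) (auto intro: cong_ideal2_add)

lemma cong_ideal2_first_multipleI: "x - y = a * h \<Longrightarrow> [x = y] (mod a, b)"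
  unfolding cong_ideal2_def by (intro exI[of _ h] exI[of _ 0]) simp

lemma cong_ideal2_second_multipleI: "x - y = b * k \<Longrightarrow> [x = y] (mod a, b)"
  unfolding cong_ideal2_def by (intro exI[of _ 0] exI[of _ k]) simp

lemma cong_ideal2_smult: "[f = g] (mod a, b) \<Longrightarrow> [smult c f = smult c g] (mod a, b)"
  using cong_ideal2_mult_left[of f g a b "[:c:]"] by simp

lemma add_power_prime:
  fixes x y :: "'a::comm_ring_1"
  assumes "prime p"
  obtains h where "(x + y) ^ p = x ^ p + y ^ p + of_nat p * h"
proof -
  have "p > 0"
    using assms prime_gt_0_nat by blast
  have middle: "of_nat (p choose k) * x ^ k * y ^ (p - k)
      = of_nat p * (of_nat ((p choose k) div p) * x ^ k * y ^ (p - k))"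
    if "k \<in> {1..<p}" for k
  proof -
    have "p dvd (p choose k)"
      using that assms by (intro dvd_choose_prime) auto
    then have "p choose k = p * ((p choose k) div p)"
      by simp
    then show ?thesis
      by (metis mult.assoc of_nat_mult)
  qed
  have "{..p} = insert 0 (insert p {1..<p})"
    using \<open>p > 0\<close> by auto
  then have "(x + y) ^ p = y ^ p + x ^ p + (\<Sum>k\<in>{1..<p}. of_nat (p choose k) * x ^ k * y ^ (p - k))"
    using \<open>p > 0\<close> by (simp add: binomial_ring)
  also have "\<dots> = x ^ p + y ^ p
      + of_nat p * (\<Sum>k\<in>{1..<p}. of_nat ((p choose k) div p) * x ^ k * y ^ (p - k))"
    by (simp add: middle sum_distrib_left)
  finally show ?thesis
    using that by blast
qed

lemma diff_power_odd_prime: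
  fixes x y :: "'a::comm_ring_1"
  assumes "prime p" "odd p"
  obtains h where "(x - y) ^ p = x ^ p - y ^ p + of_nat p * h"
  using add_power_prime[OF assms(1), of x "- y"] assms(2) by (metis diff_conv_add_uminus power_minus_odd)

section \<open>Sixteenth roots of unity modulo \<open>p\<close>\<close>

text \<open>Arithmetic in \<open>\<int>[\<zeta>]/(p)\<close>, \<open>\<zeta>\<close> a primitive 16th root of unity, is modelled in
  \<open>\<int>[X]\<close> modulo the ideal \<open>(p, X\<^sup>8 + 1)\<close>, with \<open>\<zeta> = X\<close>.\<close>

definition \<zeta> :: "int poly" where "\<zeta> = [:0, 1:]"

lemma zeta_power: "\<zeta> ^ i = monom 1 i"
  by (simp add: \<zeta>_def monom_altdef)

lemma zeta_power_mod_16: "[\<zeta> ^ a = \<zeta> ^ (a mod 16)] (mod of_nat p, \<zeta> ^ 8 + 1)"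
proof -
  have "[\<zeta> ^ (16 * q + r) = \<zeta> ^ r] (mod of_nat p, \<zeta> ^ 8 + 1)" for q r
  proof (induction q)
    case (Suc q)
    have "[\<zeta> ^ 16 = 1] (mod of_nat p, \<zeta> ^ 8 + 1)"
      by (rule cong_ideal2_second_multipleI[where k = "\<zeta> ^ 8 - 1"]) (simp add: algebra_simps flip: power_add)
    from cong_ideal2_mult[OF this Suc.IH] show ?case
      by (simp add: power_add mult.assoc)
  qed simp
  from this[of "a div 16" "a mod 16"] show ?thesis
    by simp
qed

lemma zeta_power_diff_add_8: "[\<zeta> ^ (a + 8) - \<zeta> ^ (b + 8) = - (\<zeta> ^ a - \<zeta> ^ b)] (mod of_nat p, \<zeta> ^ 8 + 1)"
  by (rule cong_ideal2_second_multipleI[where k = "\<zeta> ^ a - \<zeta> ^ b"]) (simp add: algebra_simps power_add)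

lemma zeta_power_diff_power_prime:
  assumes "prime p" "odd p"
  shows "[(\<zeta> ^ a - \<zeta> ^ b) ^ p = \<zeta> ^ (a * p mod 16) - \<zeta> ^ (b * p mod 16)] (mod of_nat p, \<zeta> ^ 8 + 1)"
proof -
  obtain h where "(\<zeta> ^ a - \<zeta> ^ b) ^ p = (\<zeta> ^ a) ^ p - (\<zeta> ^ b) ^ p + of_nat p * h"
    by (rule diff_power_odd_prime[OF assms])
  then have "[(\<zeta> ^ a - \<zeta> ^ b) ^ p = \<zeta> ^ (a * p) - \<zeta> ^ (b * p)] (mod of_nat p, \<zeta> ^ 8 + 1)"
    by (intro cong_ideal2_first_multipleI[where h = h]) (simp add: power_mult)
  also have "[\<zeta> ^ (a * p) - \<zeta> ^ (b * p) = \<zeta> ^ (a * p mod 16) - \<zeta> ^ (b * p mod 16)] (mod of_nat p, \<zeta> ^ 8 + 1)"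
    by (intro cong_ideal2_diff zeta_power_mod_16)
  finally show ?thesis .
qed

text \<open>Modulo \<open>\<zeta>\<^sup>8 + 1\<close> one has \<open>\<zeta>\<^sup>-\<^sup>k = -\<zeta>\<^sup>8\<^sup>-\<^sup>k\<close>, so with \<open>\<zeta> = e\<^sup>i\<^sup>\<pi>\<^sup>/\<^sup>8\<close> these are
  \<open>\<zeta>\<^sup>2 + \<zeta>\<^sup>-\<^sup>2 = \<surd>2\<close>, \<open>\<zeta> + \<zeta>\<^sup>-\<^sup>1 = 2 cos(\<pi>/8)\<close> and \<open>\<zeta>\<^sup>3 + \<zeta>\<^sup>-\<^sup>3 = 2 cos(3\<pi>/8)\<close>.\<close>

definition sqrt2 :: "int poly" where "sqrt2 = \<zeta> ^ 2 - \<zeta> ^ 6"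
definition two_cos_pi8 :: "int poly" where "two_cos_pi8 = \<zeta> - \<zeta> ^ 7"
definition two_cos_3pi8 :: "int poly" where "two_cos_3pi8 = \<zeta> ^ 3 - \<zeta> ^ 5"

lemma sqrt2_square: "[sqrt2 ^ 2 = 2] (mod of_nat p, \<zeta> ^ 8 + 1)"
  unfolding sqrt2_def by (rule cong_ideal2_second_multipleI[where k = "\<zeta> ^ 4 - 2"]) algebra

lemma two_cos_pi8_square: "[two_cos_pi8 ^ 2 = 2 + sqrt2] (mod of_nat p, \<zeta> ^ 8 + 1)"
  unfolding two_cos_pi8_def sqrt2_def by (rule cong_ideal2_second_multipleI[where k = "\<zeta> ^ 6 - 2"]) algebra

lemma two_cos_pi8_mult_two_cos_3pi8: "[two_cos_pi8 * two_cos_3pi8 = sqrt2] (mod of_nat p, \<zeta> ^ 8 + 1)"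
  unfolding two_cos_pi8_def two_cos_3pi8_def sqrt2_def
  by (rule cong_ideal2_second_multipleI[where k = "\<zeta> ^ 4 - \<zeta> ^ 2"]) algebra

lemma odd_mod_16_cases:
  fixes p :: nat
  assumes "odd p"
  obtains "p mod 16 = 1" | "p mod 16 = 3" | "p mod 16 = 5" | "p mod 16 = 7"
    | "p mod 16 = 9" | "p mod 16 = 11" | "p mod 16 = 13" | "p mod 16 = 15"
proof -
  have "p mod 16 = 1 \<or> p mod 16 = 3 \<or> p mod 16 = 5 \<or> p mod 16 = 7 \<or>
      p mod 16 = 9 \<or> p mod 16 = 11 \<or> p mod 16 = 13 \<or> p mod 16 = 15"
    using assms by presburger
  then show ?thesis
    using that by blast
qed

lemma sqrt2_power_prime:
  assumes "prime p" "odd p"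
  shows "[sqrt2 ^ p = (if p mod 8 \<in> {1, 7} then sqrt2 else - sqrt2)] (mod of_nat p, \<zeta> ^ 8 + 1)"
proof -
  have "[sqrt2 ^ p = \<zeta> ^ (2 * p mod 16) - \<zeta> ^ (6 * p mod 16)] (mod of_nat p, \<zeta> ^ 8 + 1)"
    unfolding sqrt2_def using zeta_power_diff_power_prime[OF assms, of 2 6] by (simp add: mult.commute)
  also have "[\<zeta> ^ (2 * p mod 16) - \<zeta> ^ (6 * p mod 16)
      = (if p mod 8 \<in> {1, 7} then sqrt2 else - sqrt2)] (mod of_nat p, \<zeta> ^ 8 + 1)"
  proof -
    have "2 * p mod 16 = 2 * (p mod 16) mod 16" "6 * p mod 16 = 6 * (p mod 16) mod 16"
      "p mod 8 = p mod 16 mod 8"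
      by (simp_all add: mod_mult_right_eq mod_mod_cancel)
    with assms(2) show ?thesis
      using zeta_power_diff_add_8[of 2 6 p] zeta_power_diff_add_8[of 6 2 p]
      by (cases rule: odd_mod_16_cases) (simp_all add: sqrt2_def)
  qed
  finally show ?thesis .
qed

lemma two_cos_pi8_power_prime:
  assumes "prime p" "odd p"
  shows "[two_cos_pi8 ^ p = (if p mod 16 \<in> {1, 15} then two_cos_pi8
      else if p mod 16 \<in> {7, 9} then - two_cos_pi8
      else if p mod 16 \<in> {3, 13} then two_cos_3pi8 else - two_cos_3pi8)] (mod of_nat p, \<zeta> ^ 8 + 1)"
proof -
  have "[two_cos_pi8 ^ p = \<zeta> ^ (p mod 16) - \<zeta> ^ (7 * p mod 16)] (mod of_nat p, \<zeta> ^ 8 + 1)"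
    unfolding two_cos_pi8_def using zeta_power_diff_power_prime[OF assms, of 1 7] by (simp add: mult.commute)
  also have "[\<zeta> ^ (p mod 16) - \<zeta> ^ (7 * p mod 16) = (if p mod 16 \<in> {1, 15} then two_cos_pi8
      else if p mod 16 \<in> {7, 9} then - two_cos_pi8
      else if p mod 16 \<in> {3, 13} then two_cos_3pi8 else - two_cos_3pi8)] (mod of_nat p, \<zeta> ^ 8 + 1)"
  proof -
    have "7 * p mod 16 = 7 * (p mod 16) mod 16"
      by (simp add: mod_mult_right_eq)
    with assms(2) show ?thesis
      using zeta_power_diff_add_8[of 1 7 p] zeta_power_diff_add_8[of 3 5 p]
        zeta_power_diff_add_8[of 5 3 p] zeta_power_diff_add_8[of 7 1 p]
      by (cases rule: odd_mod_16_cases) (simp_all add: two_cos_pi8_def two_cos_3pi8_def)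
  qed
  finally show ?thesis .
qed

section \<open>Reading off the \<open>\<surd>2\<close>-coordinate\<close>

text \<open>The coefficient of \<open>\<zeta>\<^sup>2\<close> in the reduction of a polynomial modulo \<open>\<zeta>\<^sup>8 + 1\<close>: on the
  subring \<open>\<int>[\<surd>2]\<close> it maps \<open>a + b \<surd>2\<close> to \<open>b\<close>.\<close>

definition sqrt2_weight :: "nat \<Rightarrow> int" where
  "sqrt2_weight i = (if i mod 16 = 2 then 1 else if i mod 16 = 10 then -1 else 0)"

definition sqrt2_coord :: "int poly \<Rightarrow> int" where
  "sqrt2_coord f = (\<Sum>i\<le>degree f. coeff f i * sqrt2_weight i)"

lemma sqrt2_weight_add_8: "sqrt2_weight (i + 8) = - sqrt2_weight i"
proof -
  define r where "r = i mod 16"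
  have "r < 16"
    by (simp add: r_def)
  have "(i + 8) mod 16 = (r + 8) mod 16"
    by (simp add: r_def mod_add_left_eq)
  also have "\<dots> = (if r < 8 then r + 8 else r - 8)"
  proof (cases "r < 8")
    case False
    then have "r + 8 = (r - 8) + 16"
      by simp
    then have "(r + 8) mod 16 = (r - 8) mod 16"
      by (simp only: mod_add_self2)
    with False \<open>r < 16\<close> show ?thesis
      by simp
  qed simp
  finally show ?thesis
    unfolding sqrt2_weight_def r_def[symmetric] using \<open>r < 16\<close> by auto
qed

lemma sqrt2_coord_eq_sum:
  assumes "degree f \<le> N"
  shows "sqrt2_coord f = (\<Sum>i\<le>N. coeff f i * sqrt2_weight i)"
  unfolding sqrt2_coord_def using assms
  by (intro sum.mono_neutral_left) (auto simp: coeff_eq_0)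

lemma sqrt2_coord_add: "sqrt2_coord (f + g) = sqrt2_coord f + sqrt2_coord g"
proof -
  define N where "N = max (degree f) (degree g)"
  have "degree (f + g) \<le> N" "degree f \<le> N" "degree g \<le> N"
    unfolding N_def by (auto intro: degree_add_le)
  then show ?thesis
    by (simp add: sqrt2_coord_eq_sum sum.distrib algebra_simps)
qed

lemma sqrt2_coord_smult: "sqrt2_coord (smult c f) = c * sqrt2_coord f"
  using sqrt2_coord_eq_sum[OF degree_smult_le, of c f]
  by (simp add: sqrt2_coord_def sum_distrib_left mult_ac)

lemma sqrt2_coord_0 [simp]: "sqrt2_coord 0 = 0"
  by (simp add: sqrt2_coord_def)

lemma sqrt2_coord_uminus [simp]: "sqrt2_coord (- f) = - sqrt2_coord f"
  using sqrt2_coord_smult[of "-1" f] by simp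

lemma sqrt2_coord_diff: "sqrt2_coord (f - g) = sqrt2_coord f - sqrt2_coord g"
  using sqrt2_coord_add[of f "- g"] by simp

lemma sqrt2_coord_sum: "sqrt2_coord (\<Sum>i\<in>A. f i) = (\<Sum>i\<in>A. sqrt2_coord (f i))"
  by (induction A rule: infinite_finite_induct) (simp_all add: sqrt2_coord_add)

lemma sqrt2_coord_monom: "sqrt2_coord (monom c i) = c * sqrt2_weight i"
proof -
  have "sqrt2_coord (monom c i) = (\<Sum>j\<le>i. coeff (monom c i) j * sqrt2_weight j)"
    by (rule sqrt2_coord_eq_sum) (simp add: degree_monom_le)
  also have "\<dots> = (\<Sum>j\<le>i. if i = j then c * sqrt2_weight j else 0)"
    by (rule sum.cong) (auto simp: coeff_monom)
  also have "\<dots> = c * sqrt2_weight i"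
    by simp
  finally show ?thesis .
qed

lemma sqrt2_coord_const [simp]: "sqrt2_coord [:c:] = 0"
  using sqrt2_coord_monom[of c 0] by (simp add: sqrt2_weight_def monom_0)

lemma sqrt2_coord_1 [simp]: "sqrt2_coord 1 = 0"
  by (metis one_pCons sqrt2_coord_const)

lemma sqrt2_coord_zeta_power: "sqrt2_coord (\<zeta> ^ i) = sqrt2_weight i"
  by (simp add: zeta_power sqrt2_coord_monom)

lemma sqrt2_coord_sqrt2 [simp]: "sqrt2_coord sqrt2 = 1"
  using sqrt2_coord_add[of "\<zeta> ^ 2" "- (\<zeta> ^ 6)"] sqrt2_coord_smult[of "-1" "\<zeta> ^ 6"]
  by (simp add: sqrt2_def sqrt2_coord_zeta_power sqrt2_weight_def)

lemma sqrt2_coord_ideal: "sqrt2_coord ((\<zeta> ^ 8 + 1) * k) = 0"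
proof -
  have "(\<zeta> ^ 8 + 1) * k = (\<zeta> ^ 8 + 1) * (\<Sum>i\<le>degree k. monom (coeff k i) i)"
    by (simp add: poly_as_sum_of_monoms)
  also have "\<dots> = (\<Sum>i\<le>degree k. monom (coeff k i) (i + 8) + monom (coeff k i) i)"
    by (simp add: zeta_power sum_distrib_left distrib_right mult_monom add.commute)
  finally show ?thesis
    by (simp add: sqrt2_coord_sum sqrt2_coord_add sqrt2_coord_monom sqrt2_weight_add_8)
qed

lemma sqrt2_coord_cong:
  assumes "[f = g] (mod of_nat p, \<zeta> ^ 8 + 1)"
  shows "[sqrt2_coord f = sqrt2_coord g] (mod int p)"
proof -
  obtain h k where "f = g + of_nat p * h + (\<zeta> ^ 8 + 1) * k"
    using assms unfolding cong_ideal2_def by (metis add.assoc diff_add_cancel add.commute)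
  then have "sqrt2_coord f = sqrt2_coord g + int p * sqrt2_coord h"
    by (simp add: sqrt2_coord_add sqrt2_coord_ideal sqrt2_coord_smult of_nat_poly)
  then show ?thesis
    by (simp add: cong_iff_dvd_diff)
qed

lemma sum_odd_reindex:
  "(\<Sum>i\<le>n. if odd i then f i else 0) = (\<Sum>k = 1..(n + 1) div 2. f (2 * k - 1 :: nat))"
proof (induction n)
  case (Suc n)
  show ?case
  proof (cases "odd (Suc n)")
    case True
    then have "(Suc n + 1) div 2 = Suc ((n + 1) div 2)" "2 * Suc ((n + 1) div 2) - 1 = Suc n"
      by presburger+
    with Suc True show ?thesis
      by simp
  next
    case False
    then have "(Suc n + 1) div 2 = (n + 1) div 2"
      by presburger
    with Suc False show ?thesis
      by simp
  qed
qed simp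

text \<open>\<open>(2 + \<surd>2)\<^sup>n = a + sqrt2_part n \<cdot> \<surd>2\<close> for some integer \<open>a\<close>.\<close>

definition sqrt2_part :: "nat \<Rightarrow> int" where
  "sqrt2_part n = (\<Sum>k = 1..(n + 1) div 2. 2 ^ (n - k) * int (n choose (2 * k - 1)))"

lemma sqrt2_power: "[sqrt2 ^ k = smult (2 ^ (k div 2)) (sqrt2 ^ (k mod 2))] (mod of_nat p, \<zeta> ^ 8 + 1)"
proof -
  have "sqrt2 ^ k = sqrt2 ^ (2 * (k div 2) + k mod 2)"
    by simp
  also have "\<dots> = (sqrt2 ^ 2) ^ (k div 2) * sqrt2 ^ (k mod 2)"
    by (simp only: power_add power_mult)
  also have "[\<dots> = 2 ^ (k div 2) * sqrt2 ^ (k mod 2)] (mod of_nat p, \<zeta> ^ 8 + 1)"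
    by (intro cong_ideal2_mult cong_ideal2_power sqrt2_square cong_ideal2_refl)
  finally show ?thesis
    by (simp add: numeral_poly poly_const_pow)
qed

lemma sqrt2_coord_two_plus_sqrt2_power:
  "[sqrt2_coord ((2 + sqrt2) ^ n) = sqrt2_part n] (mod int p)"
proof -
  define c where "c k = 2 ^ (n - k) * int (n choose k) * 2 ^ (k div 2)" for k
  have "(2 + sqrt2) ^ n = (\<Sum>k\<le>n. smult (2 ^ (n - k) * int (n choose k)) (sqrt2 ^ k))"
    unfolding add.commute[of 2] binomial_ring
    by (simp add: of_nat_poly numeral_poly poly_const_pow)
  also have "[\<dots> = (\<Sum>k\<le>n. smult (c k) (sqrt2 ^ (k mod 2)))] (mod of_nat p, \<zeta> ^ 8 + 1)"
    unfolding c_def by (intro cong_ideal2_sum) (use cong_ideal2_smult[OF sqrt2_power] in simp)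
  finally have "[sqrt2_coord ((2 + sqrt2) ^ n) = sqrt2_coord (\<Sum>k\<le>n. smult (c k) (sqrt2 ^ (k mod 2)))]
      (mod int p)"
    by (rule sqrt2_coord_cong)
  also have "sqrt2_coord (\<Sum>k\<le>n. smult (c k) (sqrt2 ^ (k mod 2))) = (\<Sum>k\<le>n. if odd k then c k else 0)"
    by (simp add: sqrt2_coord_sum sqrt2_coord_smult)
      (intro sum.cong refl, simp add: mod2_eq_if)
  also have "(\<Sum>k\<le>n. if odd k then c k else 0) = sqrt2_part n"
    unfolding sum_odd_reindex sqrt2_part_def c_def
  proof (intro sum.cong)
    fix k assume "k \<in> {1..(n + 1) div 2}"
    then have "n - (2 * k - 1) + (2 * k - 1) div 2 = n - k"
      by auto
    then show "2 ^ (n - (2 * k - 1)) * int (n choose (2 * k - 1)) * 2 ^ ((2 * k - 1) div 2)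
        = 2 ^ (n - k) * int (n choose (2 * k - 1))"
      by (simp add: algebra_simps flip: power_add)
  qed simp
  finally show ?thesis .
qed

lemma two_power_half_cong:
  assumes "prime p" "p = 2 * n + 1"
  shows "[2 ^ n = (if p mod 8 \<in> {1, 7} then 1 else -1)] (mod int p)"
proof -
  have "smult (2 ^ n) sqrt2 = sqrt2 * 2 ^ n"
    by (simp add: numeral_poly poly_const_pow)
  also have "[\<dots> = sqrt2 * (sqrt2 ^ 2) ^ n] (mod of_nat p, \<zeta> ^ 8 + 1)"
    by (intro cong_ideal2_mult cong_ideal2_power cong_ideal2_sym[OF sqrt2_square] cong_ideal2_refl)
  also have "sqrt2 * (sqrt2 ^ 2) ^ n = sqrt2 ^ p"
    by (simp add: assms(2) power_mult)
  also have "[\<dots> = (if p mod 8 \<in> {1, 7} then sqrt2 else - sqrt2)] (mod of_nat p, \<zeta> ^ 8 + 1)"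
    by (rule sqrt2_power_prime[OF assms(1)]) (simp add: assms(2))
  finally show ?thesis
    by (auto dest!: sqrt2_coord_cong simp: sqrt2_coord_smult)
qed

lemma two_minus_sqrt2_mult_two_plus_sqrt2: "[(2 - sqrt2) * (2 + sqrt2) = 2] (mod of_nat p, \<zeta> ^ 8 + 1)"
  using cong_ideal2_diff[OF cong_ideal2_refl sqrt2_square, of 4]
  by (simp add: algebra_simps power2_eq_square)

text \<open>Multiplying by the conjugate \<open>2 - \<surd>2\<close> turns \<open>(2 + \<surd>2)\<^sup>n\<close> into a multiple of
  \<open>(2 + \<surd>2)\<^sup>n\<^sup>+\<^sup>1 = (2 cos(\<pi>/8))\<^sup>p\<^sup>+\<^sup>1\<close>, which the Frobenius congruence can handle.\<close>

lemma two_mult_two_plus_sqrt2_power: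
  assumes "p = 2 * n + 1"
  shows "[2 * (2 + sqrt2) ^ n = (2 - sqrt2) * two_cos_pi8 * two_cos_pi8 ^ p] (mod of_nat p, \<zeta> ^ 8 + 1)"
proof -
  have "[2 * (2 + sqrt2) ^ n = (2 - sqrt2) * (2 + sqrt2) ^ (n + 1)] (mod of_nat p, \<zeta> ^ 8 + 1)"
    using cong_ideal2_mult[OF cong_ideal2_sym[OF two_minus_sqrt2_mult_two_plus_sqrt2] cong_ideal2_refl,
        of "(2 + sqrt2) ^ n"]
    by (simp add: mult.assoc)
  also have "[(2 - sqrt2) * (2 + sqrt2) ^ (n + 1) = (2 - sqrt2) * (two_cos_pi8 ^ 2) ^ (n + 1)]
      (mod of_nat p, \<zeta> ^ 8 + 1)"
    by (intro cong_ideal2_mult cong_ideal2_power cong_ideal2_sym[OF two_cos_pi8_square] cong_ideal2_refl)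
  also have "(two_cos_pi8 ^ 2) ^ (n + 1) = two_cos_pi8 * two_cos_pi8 ^ p"
  proof -
    have "2 * (n + 1) = Suc p"
      using assms by simp
    then show ?thesis
      by (simp only: power_Suc flip: power_mult)
  qed
  finally show ?thesis
    by (simp only: mult.assoc)
qed

lemma sqrt2_coord_two_cos_pi8_square:
  "[sqrt2_coord ((2 - sqrt2) * two_cos_pi8 * two_cos_pi8) = 0] (mod int p)"
  using sqrt2_coord_cong[OF cong_ideal2_trans[OF cong_ideal2_mult[OF cong_ideal2_refl
        two_cos_pi8_square[unfolded power2_eq_square]] two_minus_sqrt2_mult_two_plus_sqrt2]]
  by (simp add: numeral_poly mult.assoc)

lemma sqrt2_coord_two_cos_pi8_mult_two_cos_3pi8:
  "[sqrt2_coord ((2 - sqrt2) * two_cos_pi8 * two_cos_3pi8) = 2] (mod int p)"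
proof -
  have "[(2 - sqrt2) * two_cos_pi8 * two_cos_3pi8 = 2 * sqrt2 - sqrt2 ^ 2] (mod of_nat p, \<zeta> ^ 8 + 1)"
    using cong_ideal2_mult_left[OF two_cos_pi8_mult_two_cos_3pi8, of "2 - sqrt2"]
    by (simp add: algebra_simps power2_eq_square)
  also have "[2 * sqrt2 - sqrt2 ^ 2 = 2 * sqrt2 - 2] (mod of_nat p, \<zeta> ^ 8 + 1)"
    by (intro cong_ideal2_diff sqrt2_square cong_ideal2_refl)
  finally show ?thesis
    by (auto dest!: sqrt2_coord_cong simp: sqrt2_coord_diff numeral_poly sqrt2_coord_smult)
qed

lemma sqrt2_part_cong:
  assumes "prime p" "p = 2 * n + 1"
  shows "[sqrt2_part n = (if p mod 8 \<in> {1, 7} then 0 else if p mod 16 \<in> {3, 13} then 1 else -1)]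
    (mod int p)"
proof -
  have odd: "odd p" and mod_8: "p mod 8 = p mod 16 mod 8"
    using assms(2) by (simp_all add: mod_mod_cancel)
  let ?c11 = "sqrt2_coord ((2 - sqrt2) * two_cos_pi8 * two_cos_pi8)"
  let ?c13 = "sqrt2_coord ((2 - sqrt2) * two_cos_pi8 * two_cos_3pi8)"
  have "[2 * sqrt2_part n = 2 * sqrt2_coord ((2 + sqrt2) ^ n)] (mod int p)"
    by (intro cong_scalar_left cong_sym[OF sqrt2_coord_two_plus_sqrt2_power])
  also have "2 * sqrt2_coord ((2 + sqrt2) ^ n) = sqrt2_coord (2 * (2 + sqrt2) ^ n)"
    by (simp add: numeral_poly sqrt2_coord_smult)
  also have "[sqrt2_coord (2 * (2 + sqrt2) ^ n) = sqrt2_coord ((2 - sqrt2) * two_cos_pi8 * two_cos_pi8 ^ p)]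
      (mod int p)"
    by (rule sqrt2_coord_cong[OF two_mult_two_plus_sqrt2_power[OF assms(2)]])
  also have "[sqrt2_coord ((2 - sqrt2) * two_cos_pi8 * two_cos_pi8 ^ p) = sqrt2_coord ((2 - sqrt2) * two_cos_pi8 *
      (if p mod 16 \<in> {1, 15} then two_cos_pi8 else if p mod 16 \<in> {7, 9} then - two_cos_pi8
       else if p mod 16 \<in> {3, 13} then two_cos_3pi8 else - two_cos_3pi8))] (mod int p)"
    by (rule sqrt2_coord_cong[OF cong_ideal2_mult_left[OF two_cos_pi8_power_prime[OF assms(1) odd]]])
  also have "[sqrt2_coord ((2 - sqrt2) * two_cos_pi8 *
      (if p mod 16 \<in> {1, 15} then two_cos_pi8 else if p mod 16 \<in> {7, 9} then - two_cos_pi8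
       else if p mod 16 \<in> {3, 13} then two_cos_3pi8 else - two_cos_3pi8))
      = 2 * (if p mod 8 \<in> {1, 7} then 0 else if p mod 16 \<in> {3, 13} then 1 else -1)] (mod int p)"
    using odd mod_8 sqrt2_coord_two_cos_pi8_square[of p] sqrt2_coord_two_cos_pi8_mult_two_cos_3pi8[of p]
      cong_minus_minus_iff[of ?c11 0 "int p"] cong_minus_minus_iff[of ?c13 2 "int p"]
    by (cases rule: odd_mod_16_cases) simp_all
  finally show ?thesis
    using odd by (simp add: cong_mult_lcancel)
qed

section \<open>Binomial coefficients modulo \<open>p\<close>\<close>

lemma Suc_times_central_binomial:
  "Suc m * (2 * Suc m choose Suc m) = 2 * (2 * m + 1) * (2 * m choose m)"
proof -
  have "Suc m * (2 * Suc m choose Suc m) = (2 * m + 2) * (2 * m + 1 choose m)"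
    using Suc_times_binomial_eq[of "2 * m + 1" m] binomial_symmetric[of m "2 * m + 1"] by simp
  moreover have "Suc m * (2 * m + 1 choose m) = (2 * m + 1) * (2 * m choose m)"
    using Suc_times_binomial_eq[of "2 * m" m] binomial_symmetric[of m "2 * m + 1"] by simp
  ultimately have "Suc m * (Suc m * (2 * Suc m choose Suc m)) = Suc m * (2 * (2 * m + 1) * (2 * m choose m))"
    by (simp add: algebra_simps)
  then show ?thesis
    by (simp only: mult_cancel_left) simp
qed

lemma Suc_times_binomial_int:
  assumes "m < n"
  shows "int (Suc m) * int (n choose Suc m) = (int n - int m) * int (n choose m)"
proof -
  have "Suc m * (n choose Suc m) = (n - m) * (n choose m)"
    by (simp only: binomial_absorption binomial_absorb_comp)
  then have "int (Suc m * (n choose Suc m)) = int ((n - m) * (n choose m))"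
    by (rule arg_cong)
  with assms show ?thesis
    by (simp only: of_nat_mult of_nat_diff less_imp_le)
qed

text \<open>Since \<open>n \<equiv> -1/2 (mod p)\<close>, this is \<open>binom(2m, m) = (-4)\<^sup>m binom(-1/2, m)\<close> read modulo \<open>p\<close>.\<close>

lemma central_binomial_cong:
  assumes "prime p" "p = 2 * n + 1" "m \<le> n"
  shows "[int (2 * m choose m) = (-4) ^ m * int (n choose m)] (mod int p)"
  using assms(3)
proof (induction m)
  case (Suc m)
  have IH: "[int (2 * m choose m) = (-4) ^ m * int (n choose m)] (mod int p)"
    using Suc by simp
  have step: "[2 * (2 * int m + 1) = -4 * (int n - int m)] (mod int p)"
    unfolding cong_iff_dvd_diff using assms(2) by (intro dvdI[of _ _ 2]) (simp add: algebra_simps)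
  have "int (Suc m * (2 * Suc m choose Suc m)) = int (2 * (2 * m + 1) * (2 * m choose m))"
    by (simp only: Suc_times_central_binomial)
  then have "int (Suc m) * int (2 * Suc m choose Suc m) = 2 * (2 * int m + 1) * int (2 * m choose m)"
    by (simp only: of_nat_mult of_nat_add of_nat_numeral of_nat_1)
  also have "[\<dots> = -4 * (int n - int m) * ((-4) ^ m * int (n choose m))] (mod int p)"
    by (intro cong_mult step IH)
  also have "-4 * (int n - int m) * ((-4) ^ m * int (n choose m))
      = (-4) ^ Suc m * ((int n - int m) * int (n choose m))"
    by (simp only: power_Suc mult_ac)
  also have "\<dots> = int (Suc m) * ((-4) ^ Suc m * int (n choose Suc m))"
    unfolding Suc_times_binomial_int[OF Suc_le_lessD[OF Suc.prems], symmetric] by (simp only: mult_ac)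
  finally have "[int (Suc m) * int (2 * Suc m choose Suc m)
      = int (Suc m) * ((-4) ^ Suc m * int (n choose Suc m))] (mod int p)" .
  moreover have coprime: "coprime (int (Suc m)) (int p)"
  proof -
    have "\<not> p dvd Suc m"
      using Suc.prems assms(2) by (auto dest: dvd_imp_le)
    then have "coprime p (Suc m)"
      using assms(1) by (simp add: prime_imp_coprime)
    then show ?thesis
      unfolding coprime_int_iff by (simp add: coprime_commute)
  qed
  ultimately show ?case
    by (simp only: cong_mult_lcancel[OF coprime])
qed simp

lemma coeff_one_plus_X_power: "coeff ([:1, 1:] ^ k :: int poly) i = int (k choose i)"
proof (cases "i \<le> k")
  case False
  moreover have "degree ([:1, 1:] ^ k :: int poly) \<le> k"
    using degree_power_le[of "[:1, 1:] :: int poly" k] by simp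
  ultimately show ?thesis
    by (simp add: coeff_eq_0 binomial_eq_0)
qed (simp add: coeff_linear_poly_power)

text \<open>A special case of Lucas' theorem, via \<open>(1 + X)\<^sup>p \<equiv> 1 + X\<^sup>p (mod p)\<close>.\<close>

lemma binomial_prime_shift_cong:
  assumes "prime p" "m < p"
  shows "[int ((2 * p + 2 * m) choose (p + m)) = 2 * int (2 * m choose m)] (mod int p)"
proof -
  define Y :: "int poly" where "Y = [:1, 1:]"
  define u where "u = 1 + monom (1::int) p"
  obtain h where h: "Y ^ p = u + of_nat p * h"
  proof -
    have "Y = monom 1 1 + 1"
      by (simp add: Y_def monom_Suc one_pCons)
    then obtain h where "Y ^ p = monom 1 1 ^ p + 1 ^ p + of_nat p * h"
      using add_power_prime[OF assms(1)] by metis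
    then have "Y ^ p = u + of_nat p * h"
      by (simp add: u_def monom_power add_ac)
    then show ?thesis
      by (rule that)
  qed
  have u2: "u ^ 2 = 1 + monom 2 p + monom 1 (p + p)"
  proof -
    have "u ^ 2 = 1 + (monom 1 p + monom 1 p) + monom 1 p * monom 1 p"
      unfolding u_def power2_eq_square by (simp add: distrib_left distrib_right add.assoc)
    then show ?thesis
      by (simp add: mult_monom add_monom)
  qed
  have "Y ^ (2 * p + 2 * m) = (u + of_nat p * h) ^ 2 * Y ^ (2 * m)"
    by (simp add: h power_add power_mult mult.commute)
  also have "\<dots> = u ^ 2 * Y ^ (2 * m) + of_nat p * ((2 * u * h + of_nat p * h ^ 2) * Y ^ (2 * m))"
    by (simp add: algebra_simps power2_eq_square)
  finally have "coeff (Y ^ (2 * p + 2 * m)) (p + m)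
      = coeff (u ^ 2 * Y ^ (2 * m)) (p + m) + int p * coeff ((2 * u * h + of_nat p * h ^ 2) * Y ^ (2 * m)) (p + m)"
    by (simp add: of_nat_poly)
  moreover have "coeff (u ^ 2 * Y ^ (2 * m)) (p + m) = 2 * int (2 * m choose m)"
    using assms(2) by (simp add: u2 distrib_right coeff_monom_mult coeff_one_plus_X_power[folded Y_def] binomial_eq_0)
  ultimately show ?thesis
    by (simp add: coeff_one_plus_X_power[folded Y_def] cong_iff_dvd_diff)
qed

section \<open>Congruences between \<open>p\<close>-integral rationals\<close>

lemma qcongI:
  assumes "\<not> int p dvd n" "of_int n * (a - b) = of_int (int p * m)"
  shows "qcong a b p"
proof -
  have "n \<noteq> 0"
    using assms(1) by auto
  with assms(2) have "a - b = of_int (int p * m) / of_int n"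
    by (simp add: field_simps)
  with assms(1) \<open>n \<noteq> 0\<close> show ?thesis
    unfolding qcong_def by blast
qed

lemma qcongE:
  assumes "qcong a b p"
  obtains n m where "\<not> int p dvd n" "of_int n * (a - b) = of_int (int p * m)"
proof -
  obtain m n where "n \<noteq> 0" "\<not> int p dvd n" "a - b = of_int (int p * m) / of_int n"
    using assms unfolding qcong_def by blast
  then show ?thesis
    using that[of n m] by simp
qed

lemma qcong_refl: "prime p \<Longrightarrow> qcong a a p"
  by (rule qcongI[of p 1 _ _ 0]) (auto simp: prime_gt_1_nat)

lemma qcong_uminus:
  assumes "qcong a b p"
  shows "qcong (- a) (- b) p"
proof -
  obtain n m where nm: "\<not> int p dvd n" "of_int n * (a - b) = of_int (int p * m)"
    using assms by (rule qcongE)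
  have "of_int n * (- a - - b) = - (of_int n * (a - b))"
    by (simp add: algebra_simps)
  also have "\<dots> = of_int (int p * - m)"
    by (simp add: nm(2))
  finally show ?thesis
    by (rule qcongI[OF nm(1)])
qed

lemma qcong_sym: "qcong a b p \<Longrightarrow> qcong b a p"
  using qcong_uminus unfolding qcong_def by fastforce

lemma qcong_add:
  assumes "prime p" "qcong a b p" "qcong c d p"
  shows "qcong (a + c) (b + d) p"
proof -
  obtain n m where nm: "\<not> int p dvd n" "of_int n * (a - b) = of_int (int p * m)"
    using assms(2) by (rule qcongE)
  obtain n' m' where nm': "\<not> int p dvd n'" "of_int n' * (c - d) = of_int (int p * m')"
    using assms(3) by (rule qcongE)
  have "of_int (n * n') * ((a + c) - (b + d))
      = of_int n' * (of_int n * (a - b)) + of_int n * (of_int n' * (c - d))"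
    by (simp add: algebra_simps)
  also have "\<dots> = of_int (int p * (m * n' + m' * n))"
    unfolding nm(2) nm'(2) by (simp add: algebra_simps)
  finally have "of_int (n * n') * ((a + c) - (b + d)) = of_int (int p * (m * n' + m' * n))" .
  moreover have "\<not> int p dvd n * n'"
    using nm(1) nm'(1) assms(1) by (simp add: prime_dvd_mult_iff)
  ultimately show ?thesis
    by (intro qcongI)
qed

lemma qcong_trans: "prime p \<Longrightarrow> qcong a b p \<Longrightarrow> qcong b c p \<Longrightarrow> qcong a c p"
  using qcong_add[of p a b b c] unfolding qcong_def by simp

lemma qcong_sum:
  "prime p \<Longrightarrow> (\<And>i. i \<in> A \<Longrightarrow> qcong (f i) (g i) p) \<Longrightarrow> qcong (sum f A) (sum g A) p"
  by (induction A rule: infinite_finite_induct) (auto intro: qcong_add qcong_refl)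

lemma qcong_of_int_divide:
  assumes "prime p" "\<not> int p dvd d" "\<not> int p dvd e" "[a * e = b * d] (mod int p)"
  shows "qcong (of_int a / of_int d) (of_int b / of_int e) p"
proof -
  obtain m where m: "a * e - b * d = int p * m"
    using assms(4) by (metis cong_iff_dvd_diff dvdE)
  have "d \<noteq> 0" "e \<noteq> 0"
    using assms(2,3) by auto
  then have "of_int (d * e) * (of_int a / of_int d - of_int b / of_int e) = (of_int (a * e - b * d) :: rat)"
    by (simp add: field_simps)
  also have "\<dots> = of_int (int p * m)"
    by (simp only: m)
  finally have "of_int (d * e) * (of_int a / of_int d - of_int b / of_int e) = (of_int (int p * m) :: rat)" .
  moreover have "\<not> int p dvd d * e"
    using assms(1-3) by (simp add: prime_dvd_mult_iff)
  ultimately show ?thesis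
    by (intro qcongI)
qed

lemma not_dvd_power_two:
  assumes "prime p" "odd p"
  shows "\<not> int p dvd 2 ^ k"
proof
  assume "int p dvd 2 ^ k"
  then have "int p dvd 2"
    using assms(1) prime_dvd_power by (metis prime_nat_int_transfer)
  then have "p \<le> 2"
    using zdvd_imp_le by fastforce
  with assms show False
    using prime_ge_2_nat[OF assms(1)] by auto
qed

lemma not_dvd_power_32:
  assumes "prime p" "odd p"
  shows "\<not> int p dvd 32 ^ k"
  using not_dvd_power_two[OF assms, of "5 * k"] by (simp add: power_mult)

lemma S2_term_cong:
  assumes "prime p" "p = 2 * n + 1" "1 \<le> k" "2 * k - 1 \<le> n"
  shows "[-4 * int ((4 * k - 2) choose (2 * k - 1)) * 2 ^ k = int (n choose (2 * k - 1)) * 32 ^ k] (mod int p)"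
proof -
  have k: "4 * k - 2 = 2 * (2 * k - 1)" "Suc (2 * k - 1) = 2 * k"
    using assms(3) by auto
  have "[-4 * int ((4 * k - 2) choose (2 * k - 1)) * 2 ^ k
      = -4 * ((-4) ^ (2 * k - 1) * int (n choose (2 * k - 1))) * 2 ^ k] (mod int p)"
    unfolding k(1) by (intro cong_mult cong_refl central_binomial_cong[OF assms(1,2,4)])
  also have "-4 * ((-4) ^ (2 * k - 1) * int (n choose (2 * k - 1))) * 2 ^ k
      = (-4) ^ Suc (2 * k - 1) * 2 ^ k * int (n choose (2 * k - 1))"
    by (simp only: power_Suc mult_ac)
  also have "\<dots> = int (n choose (2 * k - 1)) * 32 ^ k"
    unfolding k(2) power_mult by (simp add: mult.commute flip: power_mult_distrib)
  finally show ?thesis .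
qed

lemma minus_four_S2_qcong:
  assumes "prime p" "p = 2 * n + 1"
  shows "qcong (-4 * (\<Sum>k = 1..(p + 1) div 4. of_nat ((4 * k - 2) choose (2 * k - 1)) / (32::rat) ^ k))
    (of_int (sqrt2_part n) / of_int (2 ^ n)) p"
proof -
  have odd: "odd p"
    using assms(2) by simp
  have K: "(p + 1) div 4 = (n + 1) div 2"
    using assms(2) by presburger
  have lhs: "-4 * (\<Sum>k = 1..(p + 1) div 4. of_nat ((4 * k - 2) choose (2 * k - 1)) / (32::rat) ^ k)
      = (\<Sum>k = 1..(n + 1) div 2. of_int (-4 * int ((4 * k - 2) choose (2 * k - 1))) / of_int (32 ^ k))"
    unfolding K by (simp add: sum_distrib_left)
  have rhs: "of_int (sqrt2_part n) / of_int (2 ^ n)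
      = (\<Sum>k = 1..(n + 1) div 2. of_int (int (n choose (2 * k - 1))) / (of_int (2 ^ k) :: rat))"
    unfolding sqrt2_part_def of_int_sum sum_divide_distrib
  proof (intro sum.cong refl)
    fix k assume "k \<in> {1..(n + 1) div 2}"
    then have "n - k + k = n"
      by auto
    then have "(2::rat) ^ n = 2 ^ (n - k) * 2 ^ k"
      by (simp flip: power_add)
    then show "of_int (2 ^ (n - k) * int (n choose (2 * k - 1))) / of_int (2 ^ n)
        = of_int (int (n choose (2 * k - 1))) / (of_int (2 ^ k) :: rat)"
      by simp
  qed
  have "qcong (\<Sum>k = 1..(n + 1) div 2. of_int (-4 * int ((4 * k - 2) choose (2 * k - 1))) / of_int (32 ^ k))
      (\<Sum>k = 1..(n + 1) div 2. of_int (int (n choose (2 * k - 1))) / of_int (2 ^ k)) p"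
    by (intro qcong_sum[OF assms(1)] qcong_of_int_divide[OF assms(1) not_dvd_power_32[OF assms(1) odd]
          not_dvd_power_two[OF assms(1) odd]] S2_term_cong[OF assms]) auto
  then show ?thesis
    by (simp only: lhs rhs)
qed

lemma sign_mult_32_power_cong:
  assumes "prime p" "p = 2 * n + 1"
  shows "[(if p mod 8 \<in> {1, 7} then 1 else -1) * 32 ^ n = (1::int)] (mod int p)"
proof -
  define \<epsilon> :: int where "\<epsilon> = (if p mod 8 \<in> {1, 7} then 1 else -1)"
  have "[(2 ^ n) ^ 5 = \<epsilon> ^ 5] (mod int p)"
    unfolding \<epsilon>_def by (rule cong_pow[OF two_power_half_cong[OF assms]])
  moreover have "(32::int) ^ n = (2 ^ n) ^ 5"
  proof -
    have "(32::int) ^ n = (2 ^ 5) ^ n"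
      by simp
    then show ?thesis
      by (simp only: mult.commute flip: power_mult)
  qed
  ultimately have "[\<epsilon> * 32 ^ n = \<epsilon> * \<epsilon> ^ 5] (mod int p)"
    by (simp add: cong_scalar_left)
  moreover have "\<epsilon> * \<epsilon> ^ 5 = 1"
    by (simp add: \<epsilon>_def)
  ultimately show ?thesis
    by (simp add: \<epsilon>_def)
qed

lemma S1_S2_term_cong:
  assumes "prime p" "p = 2 * n + 1" "1 \<le> j" "2 * j - 1 < p" "[\<epsilon> * 32 ^ n = 1] (mod int p)"
  shows "[2 * int ((4 * (j + n)) choose (2 * (j + n))) * 32 ^ j
    = \<epsilon> * 4 * int ((4 * j - 2) choose (2 * j - 1)) * 32 ^ (j + n)] (mod int p)"
proof -
  have j: "4 * (j + n) = 2 * p + 2 * (2 * j - 1)" "2 * (j + n) = p + (2 * j - 1)"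
    "4 * j - 2 = 2 * (2 * j - 1)"
    using assms(2,3) by auto
  have "[2 * int ((4 * (j + n)) choose (2 * (j + n))) * 32 ^ j
      = 2 * (2 * int (2 * (2 * j - 1) choose (2 * j - 1))) * 32 ^ j] (mod int p)"
    unfolding j(1,2) by (intro cong_mult cong_refl binomial_prime_shift_cong[OF assms(1,4)])
  also have "[2 * (2 * int (2 * (2 * j - 1) choose (2 * j - 1))) * 32 ^ j
      = 4 * int (2 * (2 * j - 1) choose (2 * j - 1)) * 32 ^ j * (\<epsilon> * 32 ^ n)] (mod int p)"
    using cong_scalar_left[OF cong_sym[OF assms(5)], of "4 * int (2 * (2 * j - 1) choose (2 * j - 1)) * 32 ^ j"]
    by simp
  also have "4 * int (2 * (2 * j - 1) choose (2 * j - 1)) * 32 ^ j * (\<epsilon> * 32 ^ n)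
      = \<epsilon> * 4 * int ((4 * j - 2) choose (2 * j - 1)) * 32 ^ (j + n)"
    by (simp add: j(3) power_add)
  finally show ?thesis .
qed

lemma two_S1_qcong:
  assumes "prime p" "p = 2 * n + 1"
  defines "\<epsilon> \<equiv> (if p mod 8 \<in> {1, 7} then 1 else -1 :: int)"
  shows "qcong (2 * (\<Sum>k = (p + 1) div 2..(3 * p) div 4. of_nat ((4 * k) choose (2 * k)) / (32::rat) ^ k))
    (of_int \<epsilon> * (4 * (\<Sum>k = 1..(p + 1) div 4. of_nat ((4 * k - 2) choose (2 * k - 1)) / (32::rat) ^ k))) p"
proof -
  have odd: "odd p"
    using assms(2) by simp
  define K where "K = (p + 1) div 4"
  have bounds: "(p + 1) div 2 = 1 + n" "(3 * p) div 4 = K + n"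
    unfolding K_def using assms(2) by presburger+
  have lhs: "2 * (\<Sum>k = (p + 1) div 2..(3 * p) div 4. of_nat ((4 * k) choose (2 * k)) / (32::rat) ^ k)
      = (\<Sum>j = 1..K. of_int (2 * int ((4 * (j + n)) choose (2 * (j + n)))) / of_int (32 ^ (j + n)))"
    unfolding bounds sum.shift_bounds_cl_nat_ivl by (simp add: sum_distrib_left)
  have rhs: "of_int \<epsilon> * (4 * (\<Sum>k = 1..K. of_nat ((4 * k - 2) choose (2 * k - 1)) / (32::rat) ^ k))
      = (\<Sum>j = 1..K. of_int (\<epsilon> * 4 * int ((4 * j - 2) choose (2 * j - 1))) / of_int (32 ^ j))"
    by (simp add: sum_distrib_left mult.assoc)
  have "qcong (\<Sum>j = 1..K. of_int (2 * int ((4 * (j + n)) choose (2 * (j + n)))) / of_int (32 ^ (j + n)))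
      (\<Sum>j = 1..K. of_int (\<epsilon> * 4 * int ((4 * j - 2) choose (2 * j - 1))) / of_int (32 ^ j)) p"
    using sign_mult_32_power_cong[OF assms(1,2)] unfolding \<epsilon>_def[symmetric]
    by (intro qcong_sum[OF assms(1)] qcong_of_int_divide[OF assms(1) not_dvd_power_32[OF assms(1) odd]
          not_dvd_power_32[OF assms(1) odd]] S1_S2_term_cong[OF assms(1,2)])
      (auto simp: K_def assms(2))
  then show ?thesis
    unfolding lhs K_def[symmetric] rhs .
qed

lemma minus_four_S2_residue:
  assumes "prime p" "p = 2 * n + 1"
  shows "qcong (-4 * (\<Sum>k = 1..(p + 1) div 4. of_nat ((4 * k - 2) choose (2 * k - 1)) / (32::rat) ^ k))
    (if p mod 8 \<in> {1, 7} then 0 else if p mod 16 \<in> {5, 11} then 1 else -1) p"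
proof -
  define \<epsilon> :: int where "\<epsilon> = (if p mod 8 \<in> {1, 7} then 1 else -1)"
  define \<sigma> :: int where "\<sigma> = (if p mod 8 \<in> {1, 7} then 0 else if p mod 16 \<in> {5, 11} then 1 else -1)"
  have "odd p" "p mod 8 = p mod 16 mod 8"
    using assms(2) by (simp_all add: mod_mod_cancel)
  then have "\<sigma> * \<epsilon> = (if p mod 8 \<in> {1, 7} then 0 else if p mod 16 \<in> {3, 13} then 1 else -1)"
    unfolding \<sigma>_def \<epsilon>_def by (cases rule: odd_mod_16_cases) simp_all
  then have "[sqrt2_part n = \<sigma> * \<epsilon>] (mod int p)"
    using sqrt2_part_cong[OF assms] by simp
  also have "[\<sigma> * \<epsilon> = \<sigma> * 2 ^ n] (mod int p)"
    unfolding \<epsilon>_def by (rule cong_scalar_left[OF cong_sym[OF two_power_half_cong[OF assms]]])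
  finally have "[sqrt2_part n * 1 = \<sigma> * 2 ^ n] (mod int p)"
    by simp
  then have "qcong (of_int (sqrt2_part n) / of_int (2 ^ n)) (of_int \<sigma> / of_int 1) p"
    using not_dvd_power_two[OF assms(1) \<open>odd p\<close>, of 0]
    by (intro qcong_of_int_divide[OF assms(1) not_dvd_power_two[OF assms(1) \<open>odd p\<close>]]) simp_all
  then have "qcong (-4 * (\<Sum>k = 1..(p + 1) div 4. of_nat ((4 * k - 2) choose (2 * k - 1)) / (32::rat) ^ k))
      (of_int \<sigma>) p"
    using qcong_trans[OF assms(1) minus_four_S2_qcong[OF assms]] by simp
  then show ?thesis
    by (cases "p mod 8 \<in> {1, 7}"; cases "p mod 16 \<in> {5, 11}") (simp_all add: \<sigma>_def)
qed

theorem corollary3p4: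
  fixes p :: nat
  assumes "prime p" and "odd p"
  defines "S1 \<equiv> (\<Sum>k = (p+1) div 2 .. (3*p) div 4. of_nat ((4*k) choose (2*k)) / (32::rat)^k)"
      and "S2 \<equiv> (\<Sum>k = 1 .. (p+1) div 4. of_nat ((4*k-2) choose (2*k-1)) / (32::rat)^k)"
  shows "qcong (2 * S1) (-4 * S2) p
     \<and> ((p mod 8 = 1 \<or> p mod 8 = 7) \<longrightarrow> qcong (-4 * S2) 0 p)
     \<and> ((p mod 16 = 5 \<or> p mod 16 = 11) \<longrightarrow> qcong (-4 * S2) 1 p)
     \<and> ((p mod 16 = 3 \<or> p mod 16 = 13) \<longrightarrow> qcong (-4 * S2) (-1) p)"
proof -
  obtain n where p: "p = 2 * n + 1"
    using \<open>odd p\<close> by (rule oddE)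
  have S2: "qcong (-4 * S2) (if p mod 8 \<in> {1, 7} then 0 else if p mod 16 \<in> {5, 11} then 1 else -1) p"
    unfolding S2_def by (rule minus_four_S2_residue[OF assms(1) p])
  have S1: "qcong (2 * S1) (of_int (if p mod 8 \<in> {1, 7} then 1 else -1) * (4 * S2)) p"
    unfolding S1_def S2_def by (rule two_S1_qcong[OF assms(1) p])
  have "qcong (2 * S1) (-4 * S2) p"
  proof (cases "p mod 8 \<in> {1, 7}")
    case True
    then have zero: "qcong (-4 * S2) 0 p"
      using S2 by simp
    have "qcong (2 * S1) (4 * S2) p"
      using S1 True by simp
    moreover have "qcong (4 * S2) 0 p"
      using qcong_uminus[OF zero] by simp
    ultimately have "qcong (2 * S1) 0 p"
      by (rule qcong_trans[OF assms(1)])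
    then show ?thesis
      using qcong_sym[OF zero] by (rule qcong_trans[OF assms(1)])
  next
    case False
    with S1 show ?thesis
      by simp
  qed
  moreover have "p mod 8 = p mod 16 mod 8"
    by (simp add: mod_mod_cancel)
  ultimately show ?thesis
    using S2 by (intro conjI impI; (elim disjE)?; simp)
qed

end
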